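(* Let $\Omega=(-X,X)\times(-Y,Y)$, let $N_x,N_y$ be even positive integers, $h_x=2X/N_x$, $h_y=2Y/N_y$. Suppose $\mathsf{J}\in C^1_{\mathrm{per}}(\Omega)$ and define its grid restriction by $J_{ij}:=\mathsf{J}(x_i,y_j)$, extended periodically in $(i,j)$. Then there is a constant $C>0$, depending on $\mathsf{J}$ (and $\Omega$) but independent of $h_x$ and $h_y$, such that for any periodic grid functions $f,g\in\mathcal{M}_h$ and any $\alpha>0$, $$|\langle J \circledast f, \Delta_N g\rangle|\le \alpha\|f\|_2^2+\frac{C}{\alpha}\|\nabla_N g\|_2^2 .$$
   Context: Grid: $x_i=-X+ih_x$, $y_j=-Y+jh_y$, index set $S_h=\{(i,j):1\le i\le N_x,1\le j\le N_y\}$, $\widehat S_h=\{(k,l)\in\mathbb{Z}^2: -N_x/2+1\le k\le N_x/2,\ -N_y/2+1\le l\le N_y/2\}$. $\mathcal{M}_h$ is the space of real grid functions $f_{ij}$ that are $N_x$-periodic in $i$ and $N_y$-periodic in $j$. Discrete inner product $\langle f,g\rangle=h_xh_y\sum_{(i,j)\in S_h}f_{ij}g_{ij}$ (for vector grid functions, sum of componentwise products), $\|f\|_2=\sqrt{\langle f,f\rangle}$. Discrete Fourier transform $\hat f_{kl}=\sum_{(i,j)\in S_h}f_{ij}e^{-\mathrm{i}k\pi x_i/X}e^{-\mathrm{i}l\pi y_j/Y}$, $(k,l)\in\widehat S_h$, with inverse $f_{ij}=\frac{1}{N_xN_y}\sum_{(k,l)\in\widehat S_h}\hat f_{kl}e^{\mathrm{i}k\pi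 x_i/X}e^{\mathrm{i}l\pi y_j/Y}$. The spectral derivatives $D_x,D_y$ act by multiplying $\hat f_{kl}$ by $\mathrm{i}k\pi/X$ and $\mathrm{i}l\pi/Y$ respectively; $\nabla_N f=(D_xf,D_yf)^T$, $\Delta_N f=D_x^2f+D_y^2f$. Discrete (periodic) convolution: $(J\circledast f)_{ij}=h_xh_y\sum_{(m,n)\in S_h}J_{i-m,j-n}f_{mn}$. *)

theory Defs
  imports "HOL-Analysis.Analysis"
begin

definition gpt :: "real \<Rightarrow> nat \<Rightarrow> int \<Rightarrow> real" where
  "gpt X N i = - X + of_int i * (2 * X / real N)"

definition Sidx :: "nat \<Rightarrow> int set" where
  "Sidx N = {1 .. int N}"

definition Shat :: "nat \<Rightarrow> int set" where
  "Shat N = {- (int N div 2) + 1 .. int N div 2}"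

definition grid_periodic :: "nat \<Rightarrow> nat \<Rightarrow> (int \<Rightarrow> int \<Rightarrow> real) \<Rightarrow> bool" where
  "grid_periodic Nx Ny f \<longleftrightarrow> (\<forall>i j. f (i + int Nx) j = f i j \<and> f i (j + int Ny) = f i j)"

definition grid_inner :: "real \<Rightarrow> real \<Rightarrow> nat \<Rightarrow> nat \<Rightarrow> (int \<Rightarrow> int \<Rightarrow> real) \<Rightarrow> (int \<Rightarrow> int \<Rightarrow> real) \<Rightarrow> real" where
  "grid_inner X Y Nx Ny f g =
     (2 * X / real Nx) * (2 * Y / real Ny) * (\<Sum>i\<in>Sidx Nx. \<Sum>j\<in>Sidx Ny. f i j * g i j)"

definition grid_norm2sq :: "real \<Rightarrow> real \<Rightarrow> nat \<Rightarrow> nat \<Rightarrow> (int \<Rightarrow> int \<Rightarrow> real) \<Rightarrow> real" where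
  "grid_norm2sq X Y Nx Ny f = grid_inner X Y Nx Ny f f"

definition dft :: "real \<Rightarrow> real \<Rightarrow> nat \<Rightarrow> nat \<Rightarrow> (int \<Rightarrow> int \<Rightarrow> real) \<Rightarrow> int \<Rightarrow> int \<Rightarrow> complex" where
  "dft X Y Nx Ny f k l =
     (\<Sum>i\<in>Sidx Nx. \<Sum>j\<in>Sidx Ny. complex_of_real (f i j)
        * exp (- \<i> * complex_of_real (of_int k * pi * gpt X Nx i / X))
        * exp (- \<i> * complex_of_real (of_int l * pi * gpt Y Ny j / Y)))"

definition spec_op :: "real \<Rightarrow> real \<Rightarrow> nat \<Rightarrow> nat \<Rightarrow> (int \<Rightarrow> int \<Rightarrow> complex)
    \<Rightarrow> (int \<Rightarrow> int \<Rightarrow> real) \<Rightarrow> int \<Rightarrow> int \<Rightarrow> complex" where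
  "spec_op X Y Nx Ny m f i j =
     (1 / (of_nat Nx * of_nat Ny)) *
     (\<Sum>k\<in>Shat Nx. \<Sum>l\<in>Shat Ny. m k l * dft X Y Nx Ny f k l
        * exp (\<i> * complex_of_real (of_int k * pi * gpt X Nx i / X))
        * exp (\<i> * complex_of_real (of_int l * pi * gpt Y Ny j / Y)))"

definition Dx :: "real \<Rightarrow> real \<Rightarrow> nat \<Rightarrow> nat \<Rightarrow> (int \<Rightarrow> int \<Rightarrow> real) \<Rightarrow> int \<Rightarrow> int \<Rightarrow> complex" where
  "Dx X Y Nx Ny = spec_op X Y Nx Ny (\<lambda>k l. \<i> * complex_of_real (of_int k * pi / X))"

definition Dy :: "real \<Rightarrow> real \<Rightarrow> nat \<Rightarrow> nat \<Rightarrow> (int \<Rightarrow> int \<Rightarrow> real) \<Rightarrow> int \<Rightarrow> int \<Rightarrow> complex" where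
  "Dy X Y Nx Ny = spec_op X Y Nx Ny (\<lambda>k l. \<i> * complex_of_real (of_int l * pi / Y))"

text \<open>Discrete Laplacian D_x^2 + D_y^2 (multiplier -(k pi/X)^2 - (l pi/Y)^2); its values are
  real, so we take the real part to view it as an element of M_h.\<close>
definition LapN :: "real \<Rightarrow> real \<Rightarrow> nat \<Rightarrow> nat \<Rightarrow> (int \<Rightarrow> int \<Rightarrow> real) \<Rightarrow> int \<Rightarrow> int \<Rightarrow> real" where
  "LapN X Y Nx Ny f i j = Re (spec_op X Y Nx Ny
      (\<lambda>k l. (\<i> * complex_of_real (of_int k * pi / X))\<^sup>2
             + (\<i> * complex_of_real (of_int l * pi / Y))\<^sup>2) f i j)"

definition grad_norm2sq :: "real \<Rightarrow> real \<Rightarrow> nat \<Rightarrow> nat \<Rightarrow> (int \<Rightarrow> int \<Rightarrow> real) \<Rightarrow> real" where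
  "grad_norm2sq X Y Nx Ny g =
     (2 * X / real Nx) * (2 * Y / real Ny) *
     (\<Sum>i\<in>Sidx Nx. \<Sum>j\<in>Sidx Ny. (cmod (Dx X Y Nx Ny g i j))\<^sup>2 + (cmod (Dy X Y Nx Ny g i j))\<^sup>2)"

definition grid_restr :: "real \<Rightarrow> real \<Rightarrow> nat \<Rightarrow> nat \<Rightarrow> (real \<times> real \<Rightarrow> real) \<Rightarrow> int \<Rightarrow> int \<Rightarrow> real" where
  "grid_restr X Y Nx Ny J i j = J (gpt X Nx i, gpt Y Ny j)"

definition grid_conv :: "real \<Rightarrow> real \<Rightarrow> nat \<Rightarrow> nat \<Rightarrow> (int \<Rightarrow> int \<Rightarrow> real) \<Rightarrow> (int \<Rightarrow> int \<Rightarrow> real) \<Rightarrow> int \<Rightarrow> int \<Rightarrow> real" where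
  "grid_conv X Y Nx Ny K f i j =
     (2 * X / real Nx) * (2 * Y / real Ny) *
     (\<Sum>m\<in>Sidx Nx. \<Sum>n\<in>Sidx Ny. K (i - m) (j - n) * f m n)"

definition C1_per :: "real \<Rightarrow> real \<Rightarrow> (real \<times> real \<Rightarrow> real) \<Rightarrow> bool" where
  "C1_per X Y J \<longleftrightarrow>
     (\<forall>x y. J (x + 2 * X, y) = J (x, y) \<and> J (x, y + 2 * Y) = J (x, y)) \<and>
     (\<exists>J'. (\<forall>z. (J has_derivative (\<lambda>h. J' z \<bullet> h)) (at z)) \<and> continuous_on UNIV J')"

end

theory Submission
  imports Defs "HOL-Library.Real_Mod"
begin

text \<open>Everything is diagonalised by the discrete Fourier transform (written with a hat).
  By Parseval, ||f||^2 and ||grad_N g||^2 are weighted sums of |f^_kl|^2 and lambda_kl |g^_kl|^2,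
  where lambda_kl = (k pi/X)^2 + (l pi/Y)^2 is the symbol of -Delta_N, and by the convolution
  theorem |<J * f, Delta_N g>| is at most h/(Nx Ny) times the sum of
  lambda_kl |g^_kl| (h |J^_kl|) |f^_kl|, where h = hx hy. The heart of the matter is that
  h |J^_kl| (|k| pi/X + |l| pi/Y) is bounded independently of the grid: summation by parts gives
  |1 - exp(2 pi i k/Nx)| |J^_kl| <= sum of |J_ij - J_(i-1)j|, these differences are O(hx)
  because J is Lipschitz on the closed rectangle, and |1 - exp(2 pi i k/Nx)| >= |k|/Nx for
  |k| <= Nx/2. As lambda_kl <= (|k| pi/X + |l| pi/Y)^2, Young's inequality applied term by term
  yields the estimate.\<close>

section \<open>Sums of periodic sequences\<close>

lemma sum_int_interval_shift:
  fixes p :: "int \<Rightarrow> 'a::comm_monoid_add"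
  shows "(\<Sum>i\<in>{a..b}. p (i + c)) = (\<Sum>i\<in>{a+c..b+c}. p i)"
  by (rule sum.reindex_bij_witness[of _ "\<lambda>i. i - c" "\<lambda>i. i + c"]) auto

lemma sum_periodic_window_step:
  fixes p :: "int \<Rightarrow> 'a::ab_group_add"
  assumes per: "\<And>i. p (i + int N) = p i"
  shows "(\<Sum>i\<in>{a+1..a+1+int N - 1}. p i) = (\<Sum>i\<in>{a..a+int N - 1}. p i)"
proof (cases "N = 0")
  case False
  have e1: "{a..a+int N} = insert a {a+1..a+1+int N - 1}"
    and e2: "{a..a+int N} = insert (a + int N) {a..a+int N - 1}"
    using False by auto
  have "p a + (\<Sum>i\<in>{a+1..a+1+int N - 1}. p i) = (\<Sum>i\<in>{a..a+int N}. p i)"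
    by (subst e1, subst sum.insert) auto
  also have "\<dots> = p (a + int N) + (\<Sum>i\<in>{a..a+int N - 1}. p i)"
    by (subst e2, subst sum.insert) auto
  finally show ?thesis using per[of a] by simp
qed simp

lemma sum_periodic_window_indep:
  fixes p :: "int \<Rightarrow> 'a::ab_group_add"
  assumes per: "\<And>i. p (i + int N) = p i"
  shows "(\<Sum>i\<in>{a..a+int N - 1}. p i) = (\<Sum>i\<in>{b..b+int N - 1}. p i)"
proof -
  have "(\<Sum>i\<in>{a..a+int N - 1}. p i) = (\<Sum>i\<in>{0..int N - 1}. p i)" for a
  proof (induction a rule: int_induct[where k=0])
    case (step1 i)
    then show ?case using sum_periodic_window_step[of p N, OF per, of i] by simp
  next
    case (step2 i)
    then show ?case using sum_periodic_window_step[of p N, OF per, of "i - 1"] by simp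
  qed simp
  then show ?thesis by metis
qed

lemma finite_Sidx [simp]: "finite (Sidx N)"
  by (simp add: Sidx_def)

lemma finite_Shat [simp]: "finite (Shat N)"
  by (simp add: Shat_def)

lemma card_Sidx [simp]: "card (Sidx N) = N"
  by (simp add: Sidx_def)

lemma card_Shat: "even N \<Longrightarrow> card (Shat N) = N"
  by (auto simp: Shat_def elim!: evenE)

lemma abs_le_half_if_Shat: "even N \<Longrightarrow> k \<in> Shat N \<Longrightarrow> 2 * \<bar>k\<bar> \<le> int N"
  by (auto simp: Shat_def elim!: evenE)

lemma sum_Sidx_shift:
  fixes p :: "int \<Rightarrow> 'a::ab_group_add"
  assumes per: "\<And>i. p (i + int N) = p i"
  shows "(\<Sum>i\<in>Sidx N. p (i - m)) = (\<Sum>i\<in>Sidx N. p i)"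
proof -
  have "(\<Sum>i\<in>Sidx N. p (i - m)) = (\<Sum>i\<in>{1-m..1-m + int N - 1}. p i)"
    unfolding Sidx_def using sum_int_interval_shift[where p=p and a=1 and b="int N" and c="-m"]
    by (simp add: algebra_simps)
  also have "\<dots> = (\<Sum>i\<in>{1..1 + int N - 1}. p i)"
    by (rule sum_periodic_window_indep[of p N, OF per])
  finally show ?thesis by (simp add: Sidx_def)
qed

lemma sum_Sidx2_shift:
  fixes G :: "int \<Rightarrow> int \<Rightarrow> 'a::ab_group_add"
  assumes per1: "\<And>i j. G (i + int N) j = G i j" and per2: "\<And>i j. G i (j + int M) = G i j"
  shows "(\<Sum>p\<in>Sidx N \<times> Sidx M. G (fst p - m) (snd p - n)) = (\<Sum>p\<in>Sidx N \<times> Sidx M. G (fst p) (snd p))"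
proof -
  have "(\<Sum>i\<in>Sidx N. \<Sum>j\<in>Sidx M. G (i - m) (j - n)) = (\<Sum>i\<in>Sidx N. \<Sum>j\<in>Sidx M. G (i - m) j)"
    by (intro sum.cong refl sum_Sidx_shift per2)
  also have "\<dots> = (\<Sum>i\<in>Sidx N. \<Sum>j\<in>Sidx M. G i j)"
    by (rule sum_Sidx_shift[where p = "\<lambda>i. \<Sum>j\<in>Sidx M. G i j"]) (simp add: per1)
  finally show ?thesis by (simp add: sum.cartesian_product case_prod_unfold)
qed

lemma gpt_divide:
  assumes "X > 0" "N > 0"
  shows "gpt X N i / X = -1 + 2 * of_int i / real N"
  using assms by (simp add: gpt_def field_simps)

lemma gpt_add_period: "N > 0 \<Longrightarrow> gpt X N (i + int N) = gpt X N i + 2 * X"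
  by (simp add: gpt_def algebra_simps add_divide_distrib)

lemma gpt_diff_pred: "gpt X N i - gpt X N (i - 1) = 2 * X / real N"
  by (simp add: gpt_def algebra_simps diff_divide_distrib)

lemma gpt_bounds:
  assumes "X > 0" "N > 0" "0 \<le> i" "i \<le> int N"
  shows "-X \<le> gpt X N i \<and> gpt X N i \<le> X"
proof -
  have "of_int i * (2 * X / real N) \<le> real N * (2 * X / real N)"
    using assms by (intro mult_right_mono) auto
  then show ?thesis using assms by (simp add: gpt_def)
qed

section \<open>Discrete Fourier analysis on the grid\<close>

definition grid_exp :: "real \<Rightarrow> nat \<Rightarrow> int \<Rightarrow> int \<Rightarrow> complex" where
  "grid_exp X N k i = cis (of_int k * pi * gpt X N i / X)"

lemma exp_i_of_real: "exp (\<i> * complex_of_real r) = cis r"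
  by (simp add: cis_conv_exp)

lemma exp_minus_i_of_real: "exp (- \<i> * complex_of_real r) = cnj (cis r)"
  unfolding cis_conv_exp by (simp add: exp_cnj)

lemma norm_grid_exp [simp]: "cmod (grid_exp X N k i) = 1"
  by (simp add: grid_exp_def)

lemma grid_exp_mult_cnj_self [simp]: "grid_exp X N k i * cnj (grid_exp X N k i) = 1"
  by (simp add: grid_exp_def cis_cnj cis_mult)

lemma grid_exp_add_period:
  assumes "X > 0" "N > 0"
  shows "grid_exp X N k (i + int N) = grid_exp X N k i"
proof -
  have "of_int k * pi * gpt X N (i + int N) / X = of_int k * pi * gpt X N i / X + 2 * pi * of_int k"
    using assms by (simp add: gpt_add_period field_simps)
  then show ?thesis
    unfolding grid_exp_def by (simp flip: cis_mult)
qed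

lemma grid_exp_diff:
  assumes "X > 0"
  shows "grid_exp X N k i = grid_exp X N k (i - m) * grid_exp X N k m * cis (of_int k * pi)"
proof -
  have "gpt X N i = gpt X N (i - m) + gpt X N m + X"
    by (simp add: gpt_def algebra_simps diff_divide_distrib add_divide_distrib)
  then have "of_int k * pi * gpt X N i / X
      = of_int k * pi * gpt X N (i - m) / X + of_int k * pi * gpt X N m / X + of_int k * pi"
    using assms by (simp add: field_simps)
  then show ?thesis
    unfolding grid_exp_def by (simp add: cis_mult)
qed

lemma grid_exp_pred:
  assumes "X > 0"
  shows "grid_exp X N k i = grid_exp X N k (i - 1) * cis (2 * pi * of_int k / real N)"
proof -
  have "of_int k * pi * gpt X N i / X = of_int k * pi * gpt X N (i - 1) / X + 2 * pi * of_int k / real N"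
    using assms gpt_diff_pred[of X N i] by (simp add: field_simps)
  then show ?thesis
    unfolding grid_exp_def by (simp add: cis_mult)
qed

lemma grid_exp_mult_cnj:
  assumes "X > 0" "N > 0"
  shows "grid_exp X N k i * cnj (grid_exp X N k' i)
    = cis (- pi * of_int (k - k')) * cis (2 * pi * of_int ((k - k') * i) / real N)"
proof -
  have "of_int k * pi * gpt X N i / X + - (of_int k' * pi * gpt X N i / X)
      = of_int (k - k') * pi * (gpt X N i / X)"
    by (simp add: algebra_simps)
  also have "\<dots> = - pi * of_int (k - k') + 2 * pi * of_int ((k - k') * i) / real N"
    unfolding gpt_divide[OF assms] by (simp add: algebra_simps)
  finally show ?thesis
    unfolding grid_exp_def cis_cnj cis_mult by (rule arg_cong)
qed

lemma cnj_grid_exp_mult: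
  assumes "X > 0" "N > 0"
  shows "cnj (grid_exp X N k i) * grid_exp X N k i' = cis (2 * pi * of_int ((i' - i) * k) / real N)"
proof -
  have "- (of_int k * pi * gpt X N i / X) + of_int k * pi * gpt X N i' / X
      = of_int k * pi * (gpt X N i' / X - gpt X N i / X)"
    by (simp add: algebra_simps)
  also have "\<dots> = 2 * pi * of_int ((i' - i) * k) / real N"
    unfolding gpt_divide[OF assms] by (simp add: algebra_simps diff_divide_distrib)
  finally show ?thesis
    unfolding grid_exp_def cis_cnj cis_mult by (rule arg_cong)
qed

lemma sum_cis_period_eq_0:
  assumes N: "N > 0" and nd: "\<not> int N dvd d"
  shows "(\<Sum>i\<in>{a..a+int N - 1}. cis (2 * pi * of_int (d * i) / real N)) = 0"
proof -
  define p where "p i = cis (2 * pi * of_int (d * i) / real N)" for i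
  define z where "z = cis (2 * pi * of_int d / real N)"
  have step: "p (i + 1) = z * p i" for i
    unfolding p_def z_def cis_mult by (simp add: algebra_simps add_divide_distrib)
  have per: "p (i + int N) = p i" for i
  proof -
    have "2 * pi * of_int (d * (i + int N)) / real N = 2 * pi * of_int (d * i) / real N + 2 * pi * of_int d"
      using N by (simp add: field_simps)
    then show ?thesis
      unfolding p_def by (simp flip: cis_mult)
  qed
  have "z \<noteq> 1"
  proof
    assume "z = 1"
    then obtain n :: int where "2 * pi * of_int d / real N = of_int n * (2 * pi)"
      unfolding z_def cis_eq_1_iff by blast
    then have "real_of_int d = real_of_int (int N * n)"
      using N by (simp add: field_simps)
    then show False
      using nd by (simp only: of_int_eq_iff) simp
  qed
  define S where "S = (\<Sum>i\<in>{a..a+int N - 1}. p i)"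
  have "(\<Sum>i\<in>{a..a+int N - 1}. p (i + 1)) = (\<Sum>i\<in>{a+1..a+1+int N - 1}. p i)"
    by (simp add: sum_int_interval_shift algebra_simps)
  also have "\<dots> = S"
    unfolding S_def by (rule sum_periodic_window_step[of p N, OF per])
  finally have "z * S = S"
    unfolding S_def step sum_distrib_left .
  with \<open>z \<noteq> 1\<close> have "S = 0"
    by (metis mult_cancel_right2)
  then show ?thesis
    unfolding S_def p_def .
qed

lemma not_dvd_if_abs_less: "d \<noteq> 0 \<Longrightarrow> \<bar>d\<bar> < int N \<Longrightarrow> \<not> int N dvd d"
  using dvd_imp_le_int[of d "int N"] by auto

lemma sum_Sidx_grid_exp_mult_cnj:
  assumes X: "X > 0" and N: "N > 0" "even N" and k: "k \<in> Shat N" "k' \<in> Shat N"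
  shows "(\<Sum>i\<in>Sidx N. grid_exp X N k i * cnj (grid_exp X N k' i)) = (if k = k' then of_nat N else 0)"
proof (cases "k = k'")
  case False
  have "\<bar>k - k'\<bar> < int N"
    using k N by (auto simp: Shat_def elim!: evenE)
  with False have "\<not> int N dvd (k - k')"
    by (intro not_dvd_if_abs_less) auto
  then have "(\<Sum>i\<in>{1..1 + int N - 1}. cis (2 * pi * of_int ((k - k') * i) / real N)) = 0"
    by (rule sum_cis_period_eq_0[OF N(1)])
  then show ?thesis
    using False by (simp add: grid_exp_mult_cnj[OF X N(1)] Sidx_def flip: sum_distrib_left)
qed (simp add: Sidx_def)

lemma sum_Shat_cnj_grid_exp_mult:
  assumes X: "X > 0" and N: "N > 0" "even N" and i: "i \<in> Sidx N" "i' \<in> Sidx N"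
  shows "(\<Sum>k\<in>Shat N. cnj (grid_exp X N k i) * grid_exp X N k i') = (if i = i' then of_nat N else 0)"
proof (cases "i = i'")
  case True
  then show ?thesis
    using card_Shat[OF N(2)] by (simp add: mult.commute[of "cnj _"])
next
  case False
  have "\<bar>i' - i\<bar> < int N"
    using i by (auto simp: Sidx_def)
  with False have "\<not> int N dvd (i' - i)"
    by (intro not_dvd_if_abs_less) auto
  from sum_cis_period_eq_0[OF N(1) this, of "- (int N div 2) + 1"] N(2) False show ?thesis
    by (auto simp: cnj_grid_exp_mult[OF X N(1)] Shat_def elim!: evenE)
qed

text \<open>\<open>b = (k, l)\<close> is a frequency in \<open>Shat N \<times> Shat M\<close>, \<open>p = (i, j)\<close> a grid index.\<close>
definition grid_char :: "real \<Rightarrow> real \<Rightarrow> nat \<Rightarrow> nat \<Rightarrow> int \<times> int \<Rightarrow> int \<times> int \<Rightarrow> complex" where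
  "grid_char X Y N M b p = grid_exp X N (fst b) (fst p) * grid_exp Y M (snd b) (snd p)"

lemma grid_char_orth_Sidx:
  assumes X: "X > 0" and Y: "Y > 0" and N: "N > 0" "even N" and M: "M > 0" "even M"
    and b: "b \<in> Shat N \<times> Shat M" "b' \<in> Shat N \<times> Shat M"
  shows "(\<Sum>p\<in>Sidx N \<times> Sidx M. grid_char X Y N M b p * cnj (grid_char X Y N M b' p))
    = (if b = b' then complex_of_real (real N * real M) else 0)"
proof -
  have "(\<Sum>p\<in>Sidx N \<times> Sidx M. grid_char X Y N M b p * cnj (grid_char X Y N M b' p))
     = (\<Sum>i\<in>Sidx N. grid_exp X N (fst b) i * cnj (grid_exp X N (fst b') i)) *
       (\<Sum>j\<in>Sidx M. grid_exp Y M (snd b) j * cnj (grid_exp Y M (snd b') j))"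
    by (simp add: grid_char_def sum_product sum.cartesian_product case_prod_unfold mult_ac)
  then show ?thesis
    using b by (auto simp: sum_Sidx_grid_exp_mult_cnj[OF X N] sum_Sidx_grid_exp_mult_cnj[OF Y M] prod_eq_iff)
qed

lemma grid_char_orth_Shat:
  assumes X: "X > 0" and Y: "Y > 0" and N: "N > 0" "even N" and M: "M > 0" "even M"
    and p: "p \<in> Sidx N \<times> Sidx M" "p' \<in> Sidx N \<times> Sidx M"
  shows "(\<Sum>b\<in>Shat N \<times> Shat M. cnj (grid_char X Y N M b p) * grid_char X Y N M b p')
    = (if p = p' then complex_of_real (real N * real M) else 0)"
proof -
  have "(\<Sum>b\<in>Shat N \<times> Shat M. cnj (grid_char X Y N M b p) * grid_char X Y N M b p')
     = (\<Sum>k\<in>Shat N. cnj (grid_exp X N k (fst p)) * grid_exp X N k (fst p')) *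
       (\<Sum>l\<in>Shat M. cnj (grid_exp Y M l (snd p)) * grid_exp Y M l (snd p'))"
    by (simp add: grid_char_def sum_product sum.cartesian_product case_prod_unfold mult_ac)
  then show ?thesis
    using p by (auto simp: sum_Shat_cnj_grid_exp_mult[OF X N] sum_Shat_cnj_grid_exp_mult[OF Y M] prod_eq_iff)
qed

lemma sum_cmod_sq_orthogonal_expansion:
  fixes \<phi> :: "'a \<Rightarrow> 'b \<Rightarrow> complex" and c :: "'b \<Rightarrow> complex" and n :: real
  assumes "finite A" "finite B"
    and orth: "\<And>b b'. b \<in> B \<Longrightarrow> b' \<in> B \<Longrightarrow>
      (\<Sum>a\<in>A. \<phi> a b * cnj (\<phi> a b')) = (if b = b' then complex_of_real n else 0)"
  shows "(\<Sum>a\<in>A. (cmod (\<Sum>b\<in>B. c b * \<phi> a b))\<^sup>2) = n * (\<Sum>b\<in>B. (cmod (c b))\<^sup>2)"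
proof -
  have "complex_of_real (\<Sum>a\<in>A. (cmod (\<Sum>b\<in>B. c b * \<phi> a b))\<^sup>2)
      = (\<Sum>a\<in>A. (\<Sum>b\<in>B. c b * \<phi> a b) * cnj (\<Sum>b'\<in>B. c b' * \<phi> a b'))"
    by (simp only: of_real_sum complex_norm_square)
  also have "\<dots> = (\<Sum>b'\<in>B. \<Sum>b\<in>B. c b * cnj (c b') * (\<Sum>a\<in>A. \<phi> a b * cnj (\<phi> a b')))"
    by (simp add: sum_distrib_left sum_distrib_right mult_ac sum.swap[of _ A])
  also have "\<dots> = (\<Sum>b'\<in>B. c b' * cnj (c b') * complex_of_real n)"
    using assms by (simp add: orth if_distrib cong: if_cong)
  also have "\<dots> = complex_of_real (n * (\<Sum>b\<in>B. (cmod (c b))\<^sup>2))"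
    by (simp add: complex_norm_square[symmetric] sum_distrib_left mult_ac)
  finally show ?thesis
    by (simp only: of_real_eq_iff)
qed

lemma dft_eq_double_sum:
  "dft X Y N M f k l = (\<Sum>i\<in>Sidx N. \<Sum>j\<in>Sidx M.
     complex_of_real (f i j) * cnj (grid_exp X N k i) * cnj (grid_exp Y M l j))"
  unfolding dft_def grid_exp_def exp_minus_i_of_real ..

lemma dft_eq_sum_grid_char:
  "dft X Y N M f k l = (\<Sum>p\<in>Sidx N \<times> Sidx M.
     complex_of_real (f (fst p) (snd p)) * cnj (grid_char X Y N M (k, l) p))"
  by (simp add: dft_eq_double_sum grid_char_def sum.cartesian_product case_prod_unfold mult.assoc)

lemma spec_op_eq_sum_grid_char:
  "spec_op X Y N M m f i j = 1 / (of_nat N * of_nat M) * (\<Sum>b\<in>Shat N \<times> Shat M.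
     m (fst b) (snd b) * dft X Y N M f (fst b) (snd b) * grid_char X Y N M b (i, j))"
  unfolding spec_op_def grid_char_def grid_exp_def exp_i_of_real sum.cartesian_product
  by (simp only: case_prod_unfold mult.assoc fst_conv snd_conv)

lemma sum_Shat_cmod_dft_sq:
  assumes X: "X > 0" and Y: "Y > 0" and N: "N > 0" "even N" and M: "M > 0" "even M"
  shows "(\<Sum>b\<in>Shat N \<times> Shat M. (cmod (dft X Y N M f (fst b) (snd b)))\<^sup>2)
       = real N * real M * (\<Sum>p\<in>Sidx N \<times> Sidx M. (f (fst p) (snd p))\<^sup>2)"
proof -
  have "(\<Sum>b\<in>Shat N \<times> Shat M. (cmod (\<Sum>p\<in>Sidx N \<times> Sidx M.
          complex_of_real (f (fst p) (snd p)) * cnj (grid_char X Y N M b p)))\<^sup>2)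
      = real N * real M * (\<Sum>p\<in>Sidx N \<times> Sidx M. (cmod (complex_of_real (f (fst p) (snd p))))\<^sup>2)"
    by (rule sum_cmod_sq_orthogonal_expansion) (simp_all add: grid_char_orth_Shat[OF X Y N M])
  then show ?thesis
    by (simp add: dft_eq_sum_grid_char)
qed

lemma sum_Sidx_cmod_spec_op_sq:
  assumes X: "X > 0" and Y: "Y > 0" and N: "N > 0" "even N" and M: "M > 0" "even M"
  shows "(\<Sum>p\<in>Sidx N \<times> Sidx M. (cmod (spec_op X Y N M m f (fst p) (snd p)))\<^sup>2)
       = (\<Sum>b\<in>Shat N \<times> Shat M. (cmod (m (fst b) (snd b) * dft X Y N M f (fst b) (snd b)))\<^sup>2)
         / (real N * real M)"
proof -
  define c where "c b = m (fst b) (snd b) * dft X Y N M f (fst b) (snd b)" for b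
  have parseval: "(\<Sum>p\<in>Sidx N \<times> Sidx M. (cmod (\<Sum>b\<in>Shat N \<times> Shat M. c b * grid_char X Y N M b p))\<^sup>2)
      = real N * real M * (\<Sum>b\<in>Shat N \<times> Shat M. (cmod (c b))\<^sup>2)"
    by (rule sum_cmod_sq_orthogonal_expansion) (simp_all add: grid_char_orth_Sidx[OF X Y N M])
  have n: "cmod (1 / (of_nat N * of_nat M :: complex)) = 1 / (real N * real M)"
    by (simp add: norm_divide norm_mult)
  have "(\<Sum>p\<in>Sidx N \<times> Sidx M. (cmod (spec_op X Y N M m f (fst p) (snd p)))\<^sup>2)
      = (\<Sum>p\<in>Sidx N \<times> Sidx M. (1 / (real N * real M))\<^sup>2 *
          (cmod (\<Sum>b\<in>Shat N \<times> Shat M. c b * grid_char X Y N M b p))\<^sup>2)"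
    unfolding spec_op_eq_sum_grid_char c_def norm_mult n power_mult_distrib prod.collapse ..
  also have "\<dots> = (1 / (real N * real M))\<^sup>2 *
      (\<Sum>p\<in>Sidx N \<times> Sidx M. (cmod (\<Sum>b\<in>Shat N \<times> Shat M. c b * grid_char X Y N M b p))\<^sup>2)"
    by (rule sum_distrib_left[symmetric])
  finally show ?thesis
    unfolding parseval using N M by (simp add: c_def power2_eq_square)
qed

lemma grid_norm2sq_eq_sum_dft:
  assumes X: "X > 0" and Y: "Y > 0" and N: "N > 0" "even N" and M: "M > 0" "even M"
  shows "grid_norm2sq X Y N M f = 2 * X / real N * (2 * Y / real M) / (real N * real M) *
     (\<Sum>b\<in>Shat N \<times> Shat M. (cmod (dft X Y N M f (fst b) (snd b)))\<^sup>2)"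
proof -
  have "grid_norm2sq X Y N M f = 2 * X / real N * (2 * Y / real M) *
      (\<Sum>p\<in>Sidx N \<times> Sidx M. (f (fst p) (snd p))\<^sup>2)"
    by (simp add: grid_norm2sq_def grid_inner_def sum.cartesian_product case_prod_unfold power2_eq_square)
  then show ?thesis
    using N M by (simp add: sum_Shat_cmod_dft_sq[OF X Y N M])
qed

lemma grad_norm2sq_eq_sum_dft:
  assumes X: "X > 0" and Y: "Y > 0" and N: "N > 0" "even N" and M: "M > 0" "even M"
  shows "grad_norm2sq X Y N M g = 2 * X / real N * (2 * Y / real M) / (real N * real M) *
     (\<Sum>b\<in>Shat N \<times> Shat M. ((real_of_int (fst b) * pi / X)\<^sup>2 + (real_of_int (snd b) * pi / Y)\<^sup>2) *
        (cmod (dft X Y N M g (fst b) (snd b)))\<^sup>2)"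
proof -
  have sq: "(cmod (\<i> * complex_of_real a * z))\<^sup>2 = a\<^sup>2 * (cmod z)\<^sup>2" for a z
    by (simp add: norm_mult power_mult_distrib)
  have "grad_norm2sq X Y N M g = 2 * X / real N * (2 * Y / real M) *
     ((\<Sum>p\<in>Sidx N \<times> Sidx M. (cmod (Dx X Y N M g (fst p) (snd p)))\<^sup>2) +
      (\<Sum>p\<in>Sidx N \<times> Sidx M. (cmod (Dy X Y N M g (fst p) (snd p)))\<^sup>2))"
    unfolding grad_norm2sq_def sum.cartesian_product sum.distrib[symmetric] by (simp add: case_prod_unfold)
  then show ?thesis
    unfolding Dx_def Dy_def sum_Sidx_cmod_spec_op_sq[OF X Y N M] sq
    by (simp add: sum.distrib[symmetric] add_divide_distrib[symmetric] distrib_right)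
qed

lemma abs_grid_inner_spec_op_le:
  "\<bar>grid_inner X Y N M u (\<lambda>i j. Re (spec_op X Y N M m g i j))\<bar>
     \<le> \<bar>2 * X / real N * (2 * Y / real M)\<bar> / (real N * real M) *
        (\<Sum>b\<in>Shat N \<times> Shat M. cmod (m (fst b) (snd b)) * cmod (dft X Y N M g (fst b) (snd b)) *
            cmod (dft X Y N M u (fst b) (snd b)))"
proof -
  define S where "S = (\<Sum>p\<in>Sidx N \<times> Sidx M.
    complex_of_real (u (fst p) (snd p)) * spec_op X Y N M m g (fst p) (snd p))"
  have "S = 1 / (of_nat N * of_nat M) * (\<Sum>b\<in>Shat N \<times> Shat M.
      m (fst b) (snd b) * dft X Y N M g (fst b) (snd b) *
      (\<Sum>p\<in>Sidx N \<times> Sidx M. complex_of_real (u (fst p) (snd p)) * grid_char X Y N M b p))"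
    unfolding S_def spec_op_eq_sum_grid_char sum_distrib_left
    by (subst sum.swap) (simp add: mult_ac)
  also have "\<dots> = 1 / (of_nat N * of_nat M) * (\<Sum>b\<in>Shat N \<times> Shat M.
      m (fst b) (snd b) * dft X Y N M g (fst b) (snd b) * cnj (dft X Y N M u (fst b) (snd b)))"
    by (simp add: dft_eq_sum_grid_char)
  finally have "cmod S = 1 / (real N * real M) * cmod (\<Sum>b\<in>Shat N \<times> Shat M.
      m (fst b) (snd b) * dft X Y N M g (fst b) (snd b) * cnj (dft X Y N M u (fst b) (snd b)))"
    by (simp add: norm_mult norm_divide)
  also have "\<dots> \<le> 1 / (real N * real M) * (\<Sum>b\<in>Shat N \<times> Shat M.
      cmod (m (fst b) (snd b)) * cmod (dft X Y N M g (fst b) (snd b)) * cmod (dft X Y N M u (fst b) (snd b)))"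
    by (intro mult_left_mono order_trans[OF norm_sum]) (simp_all add: norm_mult)
  finally have cmod_S: "cmod S \<le> \<dots>" .
  have gi: "grid_inner X Y N M u (\<lambda>i j. Re (spec_op X Y N M m g i j))
      = 2 * X / real N * (2 * Y / real M) * Re S"
    unfolding S_def grid_inner_def sum.cartesian_product Re_sum by (simp add: case_prod_unfold)
  have "\<bar>grid_inner X Y N M u (\<lambda>i j. Re (spec_op X Y N M m g i j))\<bar>
      \<le> \<bar>2 * X / real N * (2 * Y / real M)\<bar> * cmod S"
    unfolding gi abs_mult by (intro mult_left_mono abs_Re_le_cmod) simp
  also have "\<dots> \<le> \<bar>2 * X / real N * (2 * Y / real M)\<bar> * (1 / (real N * real M) * (\<Sum>b\<in>Shat N \<times> Shat M.
      cmod (m (fst b) (snd b)) * cmod (dft X Y N M g (fst b) (snd b)) * cmod (dft X Y N M u (fst b) (snd b))))"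
    by (intro mult_left_mono cmod_S) simp
  finally show ?thesis
    by simp
qed

lemma grid_conv_eq_sum_pairs:
  "grid_conv X Y N M K f i j = 2 * X / real N * (2 * Y / real M) *
     (\<Sum>q\<in>Sidx N \<times> Sidx M. K (i - fst q) (j - snd q) * f (fst q) (snd q))"
  unfolding grid_conv_def by (simp add: sum.cartesian_product case_prod_unfold)

lemma grid_char_diff:
  assumes "X > 0" "Y > 0"
  shows "grid_char X Y N M b p = grid_char X Y N M b (fst p - fst q, snd p - snd q)
    * grid_char X Y N M b q * cis (of_int (fst b + snd b) * pi)"
  using grid_exp_diff[OF assms(1), of N "fst b" "fst p" "fst q"]
    grid_exp_diff[OF assms(2), of M "snd b" "snd p" "snd q"]
  by (simp add: grid_char_def cis_mult ring_distribs mult_ac)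

lemma grid_char_add_period:
  assumes "X > 0" "Y > 0" "N > 0" "M > 0"
  shows "grid_char X Y N M b (i + int N, j) = grid_char X Y N M b (i, j)"
    and "grid_char X Y N M b (i, j + int M) = grid_char X Y N M b (i, j)"
  using assms by (simp_all add: grid_char_def grid_exp_add_period)

text \<open>The phase factor appears because the grid starts at \<open>(-X, -Y)\<close> rather than at the origin.\<close>
lemma dft_grid_conv:
  assumes X: "X > 0" and Y: "Y > 0" and N: "N > 0" and M: "M > 0" and perK: "grid_periodic N M K"
  shows "dft X Y N M (grid_conv X Y N M K f) k l =
     complex_of_real (2 * X / real N * (2 * Y / real M)) * cnj (cis (of_int (k + l) * pi)) *
     dft X Y N M K k l * dft X Y N M f k l"
proof -
  define h where "h = complex_of_real (2 * X / real N * (2 * Y / real M))"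
  define \<rho> where "\<rho> = cnj (cis (of_int (k + l) * pi))"
  define A where "A = Sidx N \<times> Sidx M"
  define e where "e = grid_char X Y N M (k, l)"
  define G where "G i j = complex_of_real (K i j) * cnj (e (i, j))" for i j
  have perG: "G (i + int N) j = G i j" "G i (j + int M) = G i j" for i j
    using perK grid_char_add_period[OF X Y N M] unfolding G_def e_def grid_periodic_def by simp_all
  have summand: "h * complex_of_real (K (fst p - fst q) (snd p - snd q) * f (fst q) (snd q)) * cnj (e p)
      = h * \<rho> * complex_of_real (f (fst q) (snd q)) * cnj (e q) * G (fst p - fst q) (snd p - snd q)" for p q
    unfolding e_def \<rho>_def G_def by (subst grid_char_diff[OF X Y, of _ _ _ p q]) (simp add: mult_ac)
  have "dft X Y N M (grid_conv X Y N M K f) k l =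
      (\<Sum>q\<in>A. \<Sum>p\<in>A. h * complex_of_real (K (fst p - fst q) (snd p - snd q) * f (fst q) (snd q)) * cnj (e p))"
    unfolding dft_eq_sum_grid_char grid_conv_eq_sum_pairs h_def A_def e_def
    by (subst sum.swap) (simp add: sum_distrib_left sum_distrib_right mult_ac)
  also have "\<dots> = (\<Sum>q\<in>A. h * \<rho> * complex_of_real (f (fst q) (snd q)) * cnj (e q) *
      (\<Sum>p\<in>A. G (fst p - fst q) (snd p - snd q)))"
    unfolding summand by (simp add: sum_distrib_left)
  also have "\<dots> = (\<Sum>q\<in>A. h * \<rho> * complex_of_real (f (fst q) (snd q)) * cnj (e q) * dft X Y N M K k l)"
    unfolding A_def sum_Sidx2_shift[of G, OF perG] by (simp add: dft_eq_sum_grid_char G_def e_def)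
  also have "\<dots> = h * \<rho> * dft X Y N M K k l * dft X Y N M f k l"
    unfolding dft_eq_sum_grid_char[of X Y N M f] A_def e_def sum_distrib_left by (simp add: mult_ac)
  finally show ?thesis
    unfolding h_def \<rho>_def .
qed

lemma cmod_dft_grid_conv:
  assumes "X > 0" "Y > 0" "N > 0" "M > 0" "grid_periodic N M K"
  shows "cmod (dft X Y N M (grid_conv X Y N M K f) k l) =
     2 * X / real N * (2 * Y / real M) * cmod (dft X Y N M K k l) * cmod (dft X Y N M f k l)"
  unfolding dft_grid_conv[OF assms] norm_mult complex_mod_cnj norm_cis norm_of_real
  using assms by simp

section \<open>Decay of the Fourier coefficients of a Lipschitz kernel\<close>

lemma x_div_4_le_sin:
  assumes "0 \<le> x" "x \<le> pi / 2"
  shows "x / 4 \<le> sin x"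
proof (cases "x \<le> pi / 3")
  case True
  show ?thesis
  proof (cases "x = 0")
    case False
    then have x0: "0 < x" using assms by simp
    obtain z where z: "0 < z" "z < x" "sin x - sin 0 = (x - 0) * cos z"
      using MVT2[of 0 x sin cos] x0 by auto
    have "cos (pi / 3) \<le> cos z"
      by (rule cos_monotone_0_pi_le) (use z True in auto)
    then have "x * (1/2) \<le> x * cos z"
      using x0 by (intro mult_left_mono) (auto simp: cos_60)
    then show ?thesis using z x0 by simp
  qed simp
next
  case False
  have "sin (pi / 3) \<le> sin x"
    using False assms by (subst sin_mono_le_eq) auto
  moreover have "1 / 2 \<le> sin (pi / 3)"
    by (simp add: sin_60)
  moreover have "x / 4 \<le> 1 / 2"
    using assms pi_less_4 by simp
  ultimately show ?thesis by linarith
qed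

lemma cmod_one_minus_cis_double: "cmod (1 - cis (2 * t)) = 2 * \<bar>sin t\<bar>"
proof -
  have "(cmod (1 - cis (2 * t)))\<^sup>2 = (1 - cos (2 * t))\<^sup>2 + (sin (2 * t))\<^sup>2"
    by (simp add: cmod_power2)
  also have "\<dots> = (2 * (sin t)\<^sup>2)\<^sup>2 + (2 * sin t * cos t)\<^sup>2"
    by (simp add: cos_double_sin sin_double)
  also have "\<dots> = 4 * (sin t)\<^sup>2 * ((sin t)\<^sup>2 + (cos t)\<^sup>2)"
    by algebra
  also have "\<dots> = (2 * \<bar>sin t\<bar>)\<^sup>2"
    by (simp only: sin_cos_squared_add) (simp add: power2_eq_square)
  finally show ?thesis
    by (rule power2_eq_imp_eq) simp_all
qed

lemma abs_le_mult_cmod_one_minus_cis: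
  assumes N: "N > 0" and k: "2 * \<bar>k\<bar> \<le> int N"
  shows "real_of_int \<bar>k\<bar> \<le> real N * cmod (1 - cis (2 * pi * of_int k / real N))"
proof -
  define t where "t = pi * of_int k / real N"
  have abs_t: "\<bar>t\<bar> = pi * real_of_int \<bar>k\<bar> / real N"
    unfolding t_def by (simp add: abs_mult)
  have "2 * real_of_int \<bar>k\<bar> \<le> real N"
    using k by linarith
  then have "\<bar>t\<bar> \<le> pi / 2"
    using N by (simp add: abs_t field_simps)
  then have sin_t: "\<bar>t\<bar> / 4 \<le> \<bar>sin t\<bar>"
    using x_div_4_le_sin[of "\<bar>t\<bar>"] by (cases "0 \<le> t") auto
  have "2 * real_of_int \<bar>k\<bar> \<le> pi * real_of_int \<bar>k\<bar>"
    using pi_gt3 by (intro mult_right_mono) auto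
  then have "real_of_int \<bar>k\<bar> \<le> real N * (2 * (\<bar>t\<bar> / 4))"
    using N by (simp add: abs_t)
  also have "\<dots> \<le> real N * (2 * \<bar>sin t\<bar>)"
    using sin_t by (intro mult_left_mono) auto
  also have "\<dots> = real N * cmod (1 - cis (2 * t))"
    by (simp add: cmod_one_minus_cis_double)
  finally show ?thesis
    by (simp add: t_def mult.assoc)
qed

lemma norm_sum_of_real_mult_unimodular_le:
  assumes "\<And>j. j \<in> A \<Longrightarrow> cmod (w j) = 1" and "\<And>j. j \<in> A \<Longrightarrow> \<bar>a j\<bar> \<le> D"
  shows "cmod (\<Sum>j\<in>A. complex_of_real (a j) * w j) \<le> real (card A) * D"
proof -
  have "cmod (\<Sum>j\<in>A. complex_of_real (a j) * w j) \<le> (\<Sum>j\<in>A. \<bar>a j\<bar>)"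
    using norm_sum[of "\<lambda>j. complex_of_real (a j) * w j" A] assms(1) by (simp add: norm_mult)
  also have "\<dots> \<le> real (card A) * D"
    using sum_bounded_above[of A "\<lambda>j. \<bar>a j\<bar>" D] assms(2) by simp
  finally show ?thesis .
qed

text \<open>Summation by parts: multiplying a Fourier sum by \<open>1 - cis (2 pi k / N)\<close> turns it into the
  Fourier sum of the backward differences.\<close>
lemma cmod_one_minus_cis_mult_cmod_sum_le:
  fixes F :: "int \<Rightarrow> complex"
  assumes X: "X > 0" and N: "N > 0" and per: "\<And>i. F (i + int N) = F i"
  shows "cmod (1 - cis (2 * pi * of_int k / real N)) * cmod (\<Sum>i\<in>Sidx N. F i * cnj (grid_exp X N k i))
    \<le> (\<Sum>i\<in>Sidx N. cmod (F i - F (i - 1)))"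
proof -
  define z where "z = cis (2 * pi * of_int k / real N)"
  define G where "G i = F i * cnj (grid_exp X N k i)" for i
  have perG: "G (i + int N) = G i" for i
    unfolding G_def by (simp add: per grid_exp_add_period[OF X N])
  have "F (i - 1) * cnj (grid_exp X N k i) = cnj z * G (i - 1)" for i
    using grid_exp_pred[OF X, of N k i] by (simp add: G_def z_def)
  then have "(\<Sum>i\<in>Sidx N. F (i - 1) * cnj (grid_exp X N k i)) = cnj z * (\<Sum>i\<in>Sidx N. G i)"
    by (simp add: sum_distrib_left[symmetric] sum_Sidx_shift[of G, OF perG])
  then have "(1 - cnj z) * (\<Sum>i\<in>Sidx N. G i) = (\<Sum>i\<in>Sidx N. (F i - F (i - 1)) * cnj (grid_exp X N k i))"
    by (simp add: G_def algebra_simps sum_subtractf)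
  then have "cmod (1 - cnj z) * cmod (\<Sum>i\<in>Sidx N. G i)
      = cmod (\<Sum>i\<in>Sidx N. (F i - F (i - 1)) * cnj (grid_exp X N k i))"
    by (subst norm_mult[symmetric]) (rule arg_cong[where f=cmod])
  also have "\<dots> \<le> (\<Sum>i\<in>Sidx N. cmod (F i - F (i - 1)))"
    by (rule order_trans[OF norm_sum]) (simp add: norm_mult)
  finally have "cmod (1 - cnj z) * cmod (\<Sum>i\<in>Sidx N. G i) \<le> \<dots>" .
  moreover have "cmod (1 - cnj z) = cmod (1 - z)"
    by (metis complex_cnj_one complex_cnj_diff complex_mod_cnj)
  ultimately show ?thesis
    by (simp add: z_def G_def)
qed

lemma abs_freq_mult_cmod_sum_le:
  fixes F :: "int \<Rightarrow> complex"
  assumes X: "X > 0" and N: "N > 0" "even N" and k: "k \<in> Shat N" and per: "\<And>i. F (i + int N) = F i"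
    and D: "\<And>i. i \<in> Sidx N \<Longrightarrow> cmod (F i - F (i - 1)) \<le> D"
  shows "real_of_int \<bar>k\<bar> * cmod (\<Sum>i\<in>Sidx N. F i * cnj (grid_exp X N k i)) \<le> real N * (real N * D)"
proof -
  have "real_of_int \<bar>k\<bar> * cmod (\<Sum>i\<in>Sidx N. F i * cnj (grid_exp X N k i))
      \<le> real N * (cmod (1 - cis (2 * pi * of_int k / real N)) * cmod (\<Sum>i\<in>Sidx N. F i * cnj (grid_exp X N k i)))"
    using abs_le_mult_cmod_one_minus_cis[OF N(1) abs_le_half_if_Shat[OF N(2) k]]
    by (simp add: mult_right_mono mult.assoc[symmetric])
  also have "\<dots> \<le> real N * (\<Sum>i\<in>Sidx N. cmod (F i - F (i - 1)))"
    by (intro mult_left_mono cmod_one_minus_cis_mult_cmod_sum_le[of X N F, OF X N(1) per]) simp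
  also have "\<dots> \<le> real N * (real N * D)"
    using sum_bounded_above[of "Sidx N" "\<lambda>i. cmod (F i - F (i - 1))" D] D by (simp add: mult_left_mono)
  finally show ?thesis .
qed

lemma abs_freq_x_mult_cmod_dft_le:
  assumes X: "X > 0" and N: "N > 0" "even N" and k: "k \<in> Shat N" and per: "grid_periodic N M K"
    and D: "\<And>i j. i \<in> Sidx N \<Longrightarrow> j \<in> Sidx M \<Longrightarrow> \<bar>K i j - K (i - 1) j\<bar> \<le> D"
  shows "real_of_int \<bar>k\<bar> * cmod (dft X Y N M K k l) \<le> real N * (real N * (real M * D))"
proof -
  define F where "F i = (\<Sum>j\<in>Sidx M. complex_of_real (K i j) * cnj (grid_exp Y M l j))" for i
  have "dft X Y N M K k l = (\<Sum>i\<in>Sidx N. F i * cnj (grid_exp X N k i))"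
    unfolding dft_eq_double_sum F_def sum_distrib_right by (simp add: mult_ac)
  moreover have "F (i + int N) = F i" for i
    using per by (simp add: F_def grid_periodic_def)
  moreover have "cmod (F i - F (i - 1)) \<le> real M * D" if "i \<in> Sidx N" for i
    using norm_sum_of_real_mult_unimodular_le[of "Sidx M" "\<lambda>j. cnj (grid_exp Y M l j)"
        "\<lambda>j. K i j - K (i - 1) j" D] D that
    by (simp add: F_def sum_subtractf[symmetric] left_diff_distrib)
  ultimately show ?thesis
    using abs_freq_mult_cmod_sum_le[OF X N k] by presburger
qed

lemma abs_freq_y_mult_cmod_dft_le:
  assumes Y: "Y > 0" and M: "M > 0" "even M" and l: "l \<in> Shat M" and per: "grid_periodic N M K"
    and D: "\<And>i j. i \<in> Sidx N \<Longrightarrow> j \<in> Sidx M \<Longrightarrow> \<bar>K i j - K i (j - 1)\<bar> \<le> D"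
  shows "real_of_int \<bar>l\<bar> * cmod (dft X Y N M K k l) \<le> real M * (real M * (real N * D))"
proof -
  define F where "F j = (\<Sum>i\<in>Sidx N. complex_of_real (K i j) * cnj (grid_exp X N k i))" for j
  have "dft X Y N M K k l = (\<Sum>j\<in>Sidx M. F j * cnj (grid_exp Y M l j))"
    unfolding dft_eq_double_sum F_def sum_distrib_right by (subst sum.swap) (simp add: mult_ac)
  moreover have "F (j + int M) = F j" for j
    using per by (simp add: F_def grid_periodic_def)
  moreover have "cmod (F j - F (j - 1)) \<le> real N * D" if "j \<in> Sidx M" for j
    using norm_sum_of_real_mult_unimodular_le[of "Sidx N" "\<lambda>i. cnj (grid_exp X N k i)"
        "\<lambda>i. K i j - K i (j - 1)" D] D that
    by (simp add: F_def sum_subtractf[symmetric] left_diff_distrib)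
  ultimately show ?thesis
    using abs_freq_mult_cmod_sum_le[OF Y M l] by presburger
qed

lemma lipschitz_bound_if_continuous_derivative:
  fixes J :: "'a::euclidean_space \<Rightarrow> real"
  assumes J': "\<And>z. (J has_derivative (\<lambda>h. J' z \<bullet> h)) (at z)" and cont: "continuous_on UNIV J'"
    and S: "compact S" "convex S"
  obtains B where "\<And>p q. p \<in> S \<Longrightarrow> q \<in> S \<Longrightarrow> \<bar>J p - J q\<bar> \<le> B * norm (p - q)"
proof -
  have "compact (J' ` S)"
    using S by (intro compact_continuous_image continuous_on_subset[OF cont]) auto
  then obtain B where B: "\<And>z. z \<in> S \<Longrightarrow> norm (J' z) \<le> B" and "B \<ge> 0"
    by (metis compact_imp_bounded bounded_pos imageI less_eq_real_def)
  have "onorm (\<lambda>h. J' z \<bullet> h) \<le> B" if "z \<in> S" for z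
  proof (rule onorm_bound[OF \<open>B \<ge> 0\<close>])
    fix h
    have "norm (J' z \<bullet> h) \<le> norm (J' z) * norm h"
      using Cauchy_Schwarz_ineq2 by simp
    also have "\<dots> \<le> B * norm h"
      using B that by (intro mult_right_mono) auto
    finally show "norm (J' z \<bullet> h) \<le> B * norm h" .
  qed
  then have "\<bar>J p - J q\<bar> \<le> B * norm (p - q)" if "p \<in> S" "q \<in> S" for p q
    using differentiable_bound[of S J "\<lambda>z h. J' z \<bullet> h" B p q] that S(2) has_derivative_at_withinI[OF J']
    by auto
  then show ?thesis
    using that by blast
qed

lemma grid_restr_periodic:
  assumes "N > 0" "M > 0" "C1_per X Y J"
  shows "grid_periodic N M (grid_restr X Y N M J)"
  using assms by (simp add: grid_periodic_def grid_restr_def C1_per_def gpt_add_period)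

lemma grid_point_in_cbox:
  assumes "X > 0" "Y > 0" "N > 0" "M > 0" "0 \<le> i" "i \<le> int N" "0 \<le> j" "j \<le> int M"
  shows "(gpt X N i, gpt Y M j) \<in> cbox (-X,-Y) (X,Y)"
  using gpt_bounds[of X N i] gpt_bounds[of Y M j] assms by (simp add: cbox_Pair_eq)

lemma grid_restr_diff_le:
  assumes X: "X > 0" and Y: "Y > 0" and N: "N > 0" and M: "M > 0"
    and lip: "\<And>p q. p \<in> cbox (-X,-Y) (X,Y) \<Longrightarrow> q \<in> cbox (-X,-Y) (X,Y) \<Longrightarrow> \<bar>J p - J q\<bar> \<le> B * norm (p - q)"
    and i: "i \<in> Sidx N" and j: "j \<in> Sidx M"
  shows "\<bar>grid_restr X Y N M J i j - grid_restr X Y N M J (i - 1) j\<bar> \<le> B * (2 * X / real N)"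
    and "\<bar>grid_restr X Y N M J i j - grid_restr X Y N M J i (j - 1)\<bar> \<le> B * (2 * Y / real M)"
proof -
  have ij: "1 \<le> i" "i \<le> int N" "1 \<le> j" "j \<le> int M"
    using i j by (auto simp: Sidx_def)
  have box: "(gpt X N i', gpt Y M j') \<in> cbox (-X,-Y) (X,Y)" if "i' \<in> {i - 1, i}" "j' \<in> {j - 1, j}" for i' j'
    using that ij by (intro grid_point_in_cbox[OF X Y N M]) auto
  show "\<bar>grid_restr X Y N M J i j - grid_restr X Y N M J (i - 1) j\<bar> \<le> B * (2 * X / real N)"
    using lip[OF box[of i j] box[of "i - 1" j]] gpt_diff_pred[of X N i] X unfolding grid_restr_def by simp
  show "\<bar>grid_restr X Y N M J i j - grid_restr X Y N M J i (j - 1)\<bar> \<le> B * (2 * Y / real M)"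
    using lip[OF box[of i j] box[of i "j - 1"]] gpt_diff_pred[of Y M j] Y unfolding grid_restr_def by simp
qed

lemma grid_restr_dft_decay:
  assumes X: "X > 0" and Y: "Y > 0" and J: "C1_per X Y J"
  obtains B where "\<And>N M k l. N > 0 \<Longrightarrow> even N \<Longrightarrow> M > 0 \<Longrightarrow> even M \<Longrightarrow> k \<in> Shat N \<Longrightarrow> l \<in> Shat M \<Longrightarrow>
      2 * X / real N * (2 * Y / real M) * cmod (dft X Y N M (grid_restr X Y N M J) k l) *
        (\<bar>real_of_int k * pi / X\<bar> + \<bar>real_of_int l * pi / Y\<bar>) \<le> B"
proof -
  obtain J' where J': "\<And>z. (J has_derivative (\<lambda>h. J' z \<bullet> h)) (at z)" "continuous_on UNIV J'"
    using J unfolding C1_per_def by blast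
  obtain L where lip:
    "\<And>p q. p \<in> cbox (-X,-Y) (X,Y) \<Longrightarrow> q \<in> cbox (-X,-Y) (X,Y) \<Longrightarrow> \<bar>J p - J q\<bar> \<le> L * norm (p - q)"
    using lipschitz_bound_if_continuous_derivative[OF J' compact_cbox convex_box(1)] by blast
  have "2 * X / real N * (2 * Y / real M) * cmod (dft X Y N M (grid_restr X Y N M J) k l) *
      (\<bar>real_of_int k * pi / X\<bar> + \<bar>real_of_int l * pi / Y\<bar>) \<le> 16 * pi * X * Y * L"
    if N: "N > 0" "even N" and M: "M > 0" "even M" and k: "k \<in> Shat N" and l: "l \<in> Shat M" for N M k l
  proof -
    define s where "s = cmod (dft X Y N M (grid_restr X Y N M J) k l)"
    note per = grid_restr_periodic[OF N(1) M(1) J]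
    note diff = grid_restr_diff_le[OF X Y N(1) M(1) lip]
    have "real_of_int \<bar>k\<bar> * s \<le> real N * (real N * (real M * (L * (2 * X / real N))))"
      unfolding s_def by (rule abs_freq_x_mult_cmod_dft_le[OF X N k per diff(1)])
    then have kx: "real_of_int \<bar>k\<bar> * s \<le> 2 * X * L * real N * real M"
      using N by (simp add: mult_ac)
    have "real_of_int \<bar>l\<bar> * s \<le> real M * (real M * (real N * (L * (2 * Y / real M))))"
      unfolding s_def by (rule abs_freq_y_mult_cmod_dft_le[OF Y M l per diff(2)])
    then have ly: "real_of_int \<bar>l\<bar> * s \<le> 2 * Y * L * real N * real M"
      using M by (simp add: mult_ac)
    have "2 * X / real N * (2 * Y / real M) * s * (\<bar>real_of_int k * pi / X\<bar> + \<bar>real_of_int l * pi / Y\<bar>)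
        = 4 * pi * Y / (real N * real M) * (real_of_int \<bar>k\<bar> * s)
          + 4 * pi * X / (real N * real M) * (real_of_int \<bar>l\<bar> * s)"
      using X Y N M by (simp add: abs_mult abs_divide field_simps)
    also have "\<dots> \<le> 4 * pi * Y / (real N * real M) * (2 * X * L * real N * real M)
          + 4 * pi * X / (real N * real M) * (2 * Y * L * real N * real M)"
      using X Y by (intro add_mono mult_left_mono kx ly) auto
    also have "\<dots> = 16 * pi * X * Y * L"
      using N M by (simp add: field_simps)
    finally show ?thesis
      unfolding s_def .
  qed
  then show ?thesis
    by (rule that)
qed

lemma abs_grid_inner_LapN_le:
  "\<bar>grid_inner X Y N M u (LapN X Y N M g)\<bar>
     \<le> \<bar>2 * X / real N * (2 * Y / real M)\<bar> / (real N * real M) *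
        (\<Sum>b\<in>Shat N \<times> Shat M. ((real_of_int (fst b) * pi / X)\<^sup>2 + (real_of_int (snd b) * pi / Y)\<^sup>2) *
          cmod (dft X Y N M g (fst b) (snd b)) * cmod (dft X Y N M u (fst b) (snd b)))"
proof -
  have symbol: "cmod ((\<i> * complex_of_real a)\<^sup>2 + (\<i> * complex_of_real b)\<^sup>2) = a\<^sup>2 + b\<^sup>2" for a b
  proof -
    have "(\<i> * complex_of_real a)\<^sup>2 + (\<i> * complex_of_real b)\<^sup>2 = - complex_of_real (a\<^sup>2 + b\<^sup>2)"
      by (simp add: power_mult_distrib)
    then show ?thesis
      by (simp only: norm_minus_cancel norm_of_real) simp
  qed
  show ?thesis
    using abs_grid_inner_spec_op_le[of X Y N M u
        "\<lambda>k l. (\<i> * complex_of_real (of_int k * pi / X))\<^sup>2 + (\<i> * complex_of_real (of_int l * pi / Y))\<^sup>2" g]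
    unfolding symbol by (simp add: LapN_def[abs_def])
qed

lemma young_product_le:
  fixes \<alpha> L t F G C :: real
  assumes "\<alpha> > 0" "L \<ge> 0" "L * t\<^sup>2 \<le> 4 * C"
  shows "L * G * (t * F) \<le> \<alpha> * F\<^sup>2 + C / \<alpha> * (L * G\<^sup>2)"
proof -
  define y where "y = L * G * t"
  have "4 * \<alpha> * (y * F) \<le> 4 * \<alpha> * (\<alpha> * F\<^sup>2) + y\<^sup>2"
    using sum_squares_ge_zero[of "2 * \<alpha> * F - y" 0] by (simp add: power2_eq_square algebra_simps)
  then have "4 * \<alpha> * (y * F) \<le> 4 * \<alpha> * (\<alpha> * F\<^sup>2 + y\<^sup>2 / (4 * \<alpha>))"
    using assms(1) by (simp add: algebra_simps)
  then have "y * F \<le> \<alpha> * F\<^sup>2 + y\<^sup>2 / (4 * \<alpha>)"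
    using assms(1) by simp
  moreover have "y\<^sup>2 = (L * G\<^sup>2) * (L * t\<^sup>2)"
    by (simp add: y_def power2_eq_square mult_ac)
  then have "y\<^sup>2 \<le> (L * G\<^sup>2) * (4 * C)"
    using assms by (metis mult_left_mono zero_le_power2 zero_le_mult_iff)
  then have "y\<^sup>2 / (4 * \<alpha>) \<le> (L * G\<^sup>2) * (4 * C) / (4 * \<alpha>)"
    using assms(1) by (intro divide_right_mono) auto
  ultimately show ?thesis
    using assms(1) by (simp add: y_def mult_ac)
qed

lemma abs_grid_inner_conv_LapN_le:
  assumes X: "X > 0" and Y: "Y > 0" and N: "N > 0" "even N" and M: "M > 0" "even M"
    and per: "grid_periodic N M K" and \<alpha>: "\<alpha> > 0" and BC: "B\<^sup>2 \<le> 4 * C"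
    and decay: "\<And>k l. k \<in> Shat N \<Longrightarrow> l \<in> Shat M \<Longrightarrow>
      2 * X / real N * (2 * Y / real M) * cmod (dft X Y N M K k l) *
        (\<bar>real_of_int k * pi / X\<bar> + \<bar>real_of_int l * pi / Y\<bar>) \<le> B"
  shows "\<bar>grid_inner X Y N M (grid_conv X Y N M K f) (LapN X Y N M g)\<bar>
    \<le> \<alpha> * grid_norm2sq X Y N M f + C / \<alpha> * grad_norm2sq X Y N M g"
proof -
  define h where "h = 2 * X / real N * (2 * Y / real M)"
  define a where "a b = real_of_int (fst b) * pi / X" for b :: "int \<times> int"
  define c where "c b = real_of_int (snd b) * pi / Y" for b :: "int \<times> int"
  define t where "t b = h * cmod (dft X Y N M K (fst b) (snd b))" for b
  define Fm where "Fm b = cmod (dft X Y N M f (fst b) (snd b))" for b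
  define Gm where "Gm b = cmod (dft X Y N M g (fst b) (snd b))" for b
  have h: "h > 0"
    unfolding h_def using X Y N M by simp
  have "\<bar>grid_inner X Y N M (grid_conv X Y N M K f) (LapN X Y N M g)\<bar>
      \<le> h / (real N * real M) * (\<Sum>b\<in>Shat N \<times> Shat M. ((a b)\<^sup>2 + (c b)\<^sup>2) * Gm b *
          cmod (dft X Y N M (grid_conv X Y N M K f) (fst b) (snd b)))"
    using abs_grid_inner_LapN_le[of X Y N M "grid_conv X Y N M K f" g] h
    unfolding h_def[symmetric] a_def[symmetric] c_def[symmetric] Gm_def[symmetric] by simp
  also have "\<dots> = h / (real N * real M) * (\<Sum>b\<in>Shat N \<times> Shat M. ((a b)\<^sup>2 + (c b)\<^sup>2) * Gm b * (t b * Fm b))"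
    unfolding cmod_dft_grid_conv[OF X Y N(1) M(1) per] t_def Fm_def h_def by (simp only: mult.assoc)
  also have "\<dots> \<le> h / (real N * real M) *
      (\<Sum>b\<in>Shat N \<times> Shat M. \<alpha> * (Fm b)\<^sup>2 + C / \<alpha> * (((a b)\<^sup>2 + (c b)\<^sup>2) * (Gm b)\<^sup>2))"
  proof (intro mult_left_mono sum_mono young_product_le[OF \<alpha>])
    fix b assume b: "b \<in> Shat N \<times> Shat M"
    have "0 \<le> 2 * \<bar>a b\<bar> * \<bar>c b\<bar> * (t b)\<^sup>2"
      by simp
    then have "((a b)\<^sup>2 + (c b)\<^sup>2) * (t b)\<^sup>2 \<le> ((\<bar>a b\<bar> + \<bar>c b\<bar>) * t b)\<^sup>2"
      by (simp add: power2_eq_square algebra_simps)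
    also have "\<dots> \<le> B\<^sup>2"
    proof (rule power_mono)
      show "(\<bar>a b\<bar> + \<bar>c b\<bar>) * t b \<le> B"
        using decay[of "fst b" "snd b"] b unfolding t_def h_def a_def c_def by (simp add: mult_ac mem_Times_iff)
      show "0 \<le> (\<bar>a b\<bar> + \<bar>c b\<bar>) * t b"
        using h by (simp add: t_def)
    qed
    finally show "((a b)\<^sup>2 + (c b)\<^sup>2) * (t b)\<^sup>2 \<le> 4 * C"
      using BC by linarith
  qed (use h in simp_all)
  also have "\<dots> = \<alpha> * (h / (real N * real M) * (\<Sum>b\<in>Shat N \<times> Shat M. (Fm b)\<^sup>2))
      + C / \<alpha> * (h / (real N * real M) * (\<Sum>b\<in>Shat N \<times> Shat M. ((a b)\<^sup>2 + (c b)\<^sup>2) * (Gm b)\<^sup>2))"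
    by (simp only: sum.distrib flip: sum_distrib_left) (simp only: distrib_left mult.left_commute)
  also have "\<dots> = \<alpha> * grid_norm2sq X Y N M f + C / \<alpha> * grad_norm2sq X Y N M g"
    by (simp only: grid_norm2sq_eq_sum_dft[OF X Y N M] grad_norm2sq_eq_sum_dft[OF X Y N M]
        a_def c_def Fm_def Gm_def h_def)
  finally show ?thesis .
qed

theorem lemma2p2:
  fixes X Y :: real and J :: "real \<times> real \<Rightarrow> real"
  assumes "X > 0" and "Y > 0" and "C1_per X Y J"
  shows "\<exists>C>0. \<forall>Nx Ny :: nat. even Nx \<and> Nx > 0 \<and> even Ny \<and> Ny > 0 \<longrightarrow>
           (\<forall>f g \<alpha>. grid_periodic Nx Ny f \<and> grid_periodic Nx Ny g \<and> \<alpha> > 0 \<longrightarrow>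
              \<bar>grid_inner X Y Nx Ny (grid_conv X Y Nx Ny (grid_restr X Y Nx Ny J) f)
                                      (LapN X Y Nx Ny g)\<bar>
              \<le> \<alpha> * grid_norm2sq X Y Nx Ny f + C / \<alpha> * grad_norm2sq X Y Nx Ny g)"
proof -
  obtain B where decay: "\<And>N M k l. N > 0 \<Longrightarrow> even N \<Longrightarrow> M > 0 \<Longrightarrow> even M \<Longrightarrow> k \<in> Shat N \<Longrightarrow> l \<in> Shat M \<Longrightarrow>
      2 * X / real N * (2 * Y / real M) * cmod (dft X Y N M (grid_restr X Y N M J) k l) *
        (\<bar>real_of_int k * pi / X\<bar> + \<bar>real_of_int l * pi / Y\<bar>) \<le> B"
    using grid_restr_dft_decay[OF assms] by metis
  define C where "C = B\<^sup>2 / 4 + 1"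
  have "C > 0" and BC: "B\<^sup>2 \<le> 4 * C"
    unfolding C_def by (simp_all add: add_nonneg_pos)
  have "\<bar>grid_inner X Y N M (grid_conv X Y N M (grid_restr X Y N M J) f) (LapN X Y N M g)\<bar>
      \<le> \<alpha> * grid_norm2sq X Y N M f + C / \<alpha> * grad_norm2sq X Y N M g"
    if "N > 0" "even N" "M > 0" "even M" "\<alpha> > 0" for N M f g and \<alpha> :: real
    using decay[OF that(1-4)]
    by (rule abs_grid_inner_conv_LapN_le[OF assms(1,2) that(1-4) grid_restr_periodic[OF that(1,3) assms(3)]
          that(5) BC])
  with \<open>C > 0\<close> show ?thesis
    by (intro exI[of _ C]) auto
qed

end
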